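(* If $C\subseteq\mathbb{R}$ satisfies $|C|=|\mathbb{R}\setminus C|=\mathfrak{c}$, then there is a two-point selection $f$ on $\mathbb{R}$ such that $C\in\mathcal{M}_f\setminus\mathcal{B}_f(\mathbb{R})$.
   Context: $\mathfrak{c}=|\mathbb{R}|$. A two-point selection on $\mathbb{R}$ is a function $f$ from the set of two-element subsets of $\mathbb{R}$ to $\mathbb{R}$ with $f(F)\in F$. Write $r<_f s$ if $f(\{r,s\})=r$ ($r\ne s$) and $r\le_f s$ if $r<_f s$ or $r=s$. Put $(\leftarrow,r)_f=\{x: x<_f r\}$, $(r,\rightarrow)_f=\{x: r<_f x\}$, and $(r,s]_f=\{x: r<_f x \text{ and } x\le_f s\}$. The topology $\tau_f$ is generated (as a subbase) by all $(\leftarrow,r)_f$, $(r,\rightarrow)_f$; $\mathcal{B}_f(\mathbb{R})$ is the $\sigma$-algebra generated by $\tau_f$. The outer measure $\lambda_f$ on $\mathbb{R}$ is $\lambda_f(A)=\inf\{\sum_{n\in\mathbb{N}}|s_n-r_n| : A\subseteq\bigcup_{n\in\mathbb{N}}(r_n,s_n]_f\}$ if $A$ can be covered by countably many such sets, and $\lambda_f(A)=+\infty$ otherwise. $\mathcal{M}_f$ is the $\sigma$-algebra of $\lambda_f$-measurable sets (in the sense of Carathéodory). *)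

theory Defs
  imports "HOL-Analysis.Analysis" "HOL-Library.Equipollence"
begin

text \<open>A two-point selection on the reals: a choice function on two-element subsets.
  (Values on sets that are not two-element are irrelevant.)\<close>
definition two_point_selection :: "(real set \<Rightarrow> real) \<Rightarrow> bool" where
  "two_point_selection f \<longleftrightarrow> (\<forall>F. card F = 2 \<longrightarrow> f F \<in> F)"

definition sel_less :: "(real set \<Rightarrow> real) \<Rightarrow> real \<Rightarrow> real \<Rightarrow> bool" where
  "sel_less f r s \<longleftrightarrow> r \<noteq> s \<and> f {r, s} = r"

definition sel_le :: "(real set \<Rightarrow> real) \<Rightarrow> real \<Rightarrow> real \<Rightarrow> bool" where
  "sel_le f r s \<longleftrightarrow> sel_less f r s \<or> r = s"

definition sel_ray_left :: "(real set \<Rightarrow> real) \<Rightarrow> real \<Rightarrow> real set" where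
  "sel_ray_left f r = {x. sel_less f x r}"

definition sel_ray_right :: "(real set \<Rightarrow> real) \<Rightarrow> real \<Rightarrow> real set" where
  "sel_ray_right f r = {x. sel_less f r x}"

definition sel_Ioc :: "(real set \<Rightarrow> real) \<Rightarrow> real \<Rightarrow> real \<Rightarrow> real set" where
  "sel_Ioc f r s = {x. sel_less f r x \<and> sel_le f x s}"

definition sel_topology :: "(real set \<Rightarrow> real) \<Rightarrow> real topology" where
  "sel_topology f = topology_generated_by
     ({sel_ray_left f r | r. True} \<union> {sel_ray_right f r | r. True})"

definition sel_borel :: "(real set \<Rightarrow> real) \<Rightarrow> real set set" where
  "sel_borel f = sigma_sets UNIV {U. openin (sel_topology f) U}"

text \<open>The outer measure \<lambda>_f; the infimum of the empty set is \<infinity> in ennreal.\<close>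
definition sel_outer :: "(real set \<Rightarrow> real) \<Rightarrow> real set \<Rightarrow> ennreal" where
  "sel_outer f A = Inf {(\<Sum>n. ennreal \<bar>s n - r n\<bar>) | r s :: nat \<Rightarrow> real.
                         A \<subseteq> (\<Union>n. sel_Ioc f (r n) (s n))}"

definition sel_measurable :: "(real set \<Rightarrow> real) \<Rightarrow> real set set" where
  "sel_measurable f = lambda_system UNIV UNIV (sel_outer f)"

end

theory Submission
  imports Defs
begin

text \<open>Pair every point of \<open>C\<close> with a twin outside \<open>C\<close> and give both the same key \<open>p\<close>; the
  selection \<open>f\<close> picks the smaller key and, between twins, the point of \<open>C\<close>. Then \<open>\<tau>\<^sub>f\<close> is a
  double arrow topology: an open set containing a point of \<open>C\<close> contains a left key-neighbourhood
  of it, one containing a point outside \<open>C\<close> a right key-neighbourhood. Hence every open set, and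
  therefore every set in \<open>\<B>\<^sub>f(\<real>)\<close>, separates only countably many twin pairs, whereas \<open>C\<close>
  separates all of them. The keys are chosen so that there are points \<open>a\<^sub>n, b\<^sub>n\<close> at Euclidean
  distance below \<open>2\<^sup>-\<^sup>n\<close> with keys below \<open>-n\<close> and above \<open>n\<close>. Every tail of the intervals
  \<open>(a\<^sub>n, b\<^sub>n]\<^sub>f\<close> covers \<open>\<real>\<close>, so \<open>\<lambda>\<^sub>f\<close> vanishes and every set is \<open>\<lambda>\<^sub>f\<close>-measurable.\<close>

definition lex_less :: "(real \<Rightarrow> real) \<Rightarrow> real set \<Rightarrow> real \<Rightarrow> real \<Rightarrow> bool" where
  "lex_less p C x y \<longleftrightarrow> p x < p y \<or> (p x = p y \<and> x \<in> C \<and> y \<notin> C)"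

definition lex_sel :: "(real \<Rightarrow> real) \<Rightarrow> real set \<Rightarrow> real set \<Rightarrow> real" where
  "lex_sel p C F = (SOME x. x \<in> F \<and> (\<forall>y\<in>F. y \<noteq> x \<longrightarrow> lex_less p C x y))"

definition lex_open :: "(real \<Rightarrow> real) \<Rightarrow> real set \<Rightarrow> real set \<Rightarrow> bool" where
  "lex_open p C U \<longleftrightarrow>
     (\<forall>x\<in>U. \<forall>\<^sub>F v in (if x \<in> C then at_left (p x) else at_right (p x)). p -` {v} \<subseteq> U)"

definition split_keys :: "(real \<Rightarrow> real) \<Rightarrow> real set \<Rightarrow> real set \<Rightarrow> real set" where
  "split_keys p C A = {v. \<exists>x\<in>C. \<exists>y. y \<notin> C \<and> p x = v \<and> p y = v \<and> (x \<in> A \<longleftrightarrow> y \<notin> A)}"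

lemma countable_if_eventually_not_in_at_left:
  fixes V :: "real set"
  assumes "\<And>v. v \<in> V \<Longrightarrow> \<forall>\<^sub>F u in at_left v. u \<notin> V"
  shows "countable V"
proof -
  have "\<exists>q w. q \<in> \<rat> \<and> w < q \<and> q < v \<and> {w<..<v} \<inter> V = {}" if v: "v \<in> V" for v
  proof -
    obtain w where "w < v" and "\<forall>u>w. u < v \<longrightarrow> u \<notin> V"
      using assms[OF v] by (auto simp: eventually_at_left_field)
    then have "{w<..<v} \<inter> V = {}"
      by auto
    moreover obtain q where "q \<in> \<rat>" "w < q" "q < v"
      using Rats_dense_in_real[OF \<open>w < v\<close>] by blast
    ultimately show ?thesis by blast
  qed
  then obtain q w where qw: "\<And>v. v \<in> V \<Longrightarrow> q v \<in> \<rat> \<and> w v < q v \<and> q v < v \<and> {w v<..<v} \<inter> V = {}"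
    by metis
  have "inj_on q V"
  proof (rule linorder_inj_onI')
    fix v v' assume v: "v \<in> V" "v' \<in> V" "v < v'"
    then have "v \<in> {w v'<..<v'}" if "q v = q v'"
      using qw[of v] qw[of v'] that by auto
    then show "q v \<noteq> q v'"
      using qw[of v'] v by blast
  qed
  moreover have "q ` V \<subseteq> \<rat>"
    using qw by auto
  ultimately show ?thesis
    by (meson countable_image_inj_on countable_rat countable_subset)
qed

lemma countable_if_eventually_not_in_at_right:
  fixes V :: "real set"
  assumes "\<And>v. v \<in> V \<Longrightarrow> \<forall>\<^sub>F u in at_right v. u \<notin> V"
  shows "countable V"
proof -
  have "countable (uminus ` V)"
    by (rule countable_if_eventually_not_in_at_left)
      (auto simp: eventually_at_left_to_right image_iff elim!: eventually_mono[OF assms])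
  then have "countable (uminus ` uminus ` V)"
    by (rule countable_image)
  then show ?thesis
    by (simp add: image_image)
qed

lemma sel_outer_eq_0_if_tail_cover:
  assumes summable: "summable (\<lambda>n. \<bar>b n - a n\<bar>)"
    and cover: "\<And>x N. \<exists>n\<ge>N. x \<in> sel_Ioc f (a n) (b n)"
  shows "sel_outer f A = 0"
proof -
  have "sel_outer f A \<le> 0 + ennreal e" if e: "0 < e" for e
  proof -
    obtain N where N: "norm (\<Sum>k. \<bar>b (k + N) - a (k + N)\<bar>) < e"
      using suminf_exist_split[OF e summable] by blast
    have "A \<subseteq> (\<Union>k. sel_Ioc f (a (k + N)) (b (k + N)))"
    proof
      fix x assume "x \<in> A"
      obtain n where "N \<le> n" "x \<in> sel_Ioc f (a n) (b n)"
        using cover by blast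
      then show "x \<in> (\<Union>k. sel_Ioc f (a (k + N)) (b (k + N)))"
        by (intro UN_I[of "n - N"]) auto
    qed
    then have "sel_outer f A \<le> (\<Sum>k. ennreal \<bar>b (k + N) - a (k + N)\<bar>)"
      unfolding sel_outer_def
      by (intro Inf_lower CollectI exI[of _ "\<lambda>k. a (k + N)"] exI[of _ "\<lambda>k. b (k + N)"]) simp
    also have "\<dots> = ennreal (\<Sum>k. \<bar>b (k + N) - a (k + N)\<bar>)"
      using summable_ignore_initial_segment[OF summable] by (intro suminf_ennreal2) auto
    also have "\<dots> \<le> ennreal e"
      using N by (intro ennreal_leI) simp
    finally show ?thesis
      by simp
  qed
  then have "sel_outer f A \<le> 0"
    by (rule ennreal_le_epsilon)
  then show ?thesis
    by simp
qed

lemma sel_measurable_eq_UNIV_if_sel_outer_eq_0: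
  assumes "\<And>A. sel_outer f A = 0"
  shows "sel_measurable f = UNIV"
  using assms by (simp add: sel_measurable_def lambda_system_def)

lemma lex_less_asym: "lex_less p C x y \<Longrightarrow> \<not> lex_less p C y x"
  unfolding lex_less_def by auto

lemma lex_open_lex_less_below: "lex_open p C {x. lex_less p C x r}"
  unfolding lex_open_def
proof
  fix x assume x: "x \<in> {x. lex_less p C x r}"
  show "\<forall>\<^sub>F v in (if x \<in> C then at_left (p x) else at_right (p x)). p -` {v} \<subseteq> {x. lex_less p C x r}"
  proof (cases "x \<in> C")
    case True
    then have "p x \<le> p r"
      using x by (auto simp: lex_less_def)
    with True show ?thesis
      by (auto intro!: eventually_at_leftI[of "p x - 1"] simp: lex_less_def)
  next
    case False
    then have "p x < p r"
      using x by (auto simp: lex_less_def)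
    with False show ?thesis
      by (auto intro!: eventually_at_rightI[of "p x" "p r"] simp: lex_less_def)
  qed
qed

lemma lex_open_lex_less_above: "lex_open p C {x. lex_less p C r x}"
  unfolding lex_open_def
proof
  fix x assume x: "x \<in> {x. lex_less p C r x}"
  show "\<forall>\<^sub>F v in (if x \<in> C then at_left (p x) else at_right (p x)). p -` {v} \<subseteq> {x. lex_less p C r x}"
  proof (cases "x \<in> C")
    case True
    then have "p r < p x"
      using x by (auto simp: lex_less_def)
    with True show ?thesis
      by (auto intro!: eventually_at_leftI[of "p r" "p x"] simp: lex_less_def)
  next
    case False
    then have "p r \<le> p x"
      using x by (auto simp: lex_less_def)
    with False show ?thesis
      by (auto intro!: eventually_at_rightI[of "p x" "p x + 1"] simp: lex_less_def)
  qed
qed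

lemma countable_split_keys_if_lex_open:
  assumes "lex_open p C U"
  shows "countable (split_keys p C U)"
proof -
  have "countable (p ` (C \<inter> U) \<inter> p ` (- U))"
  proof (rule countable_if_eventually_not_in_at_left)
    fix v assume "v \<in> p ` (C \<inter> U) \<inter> p ` (- U)"
    then obtain x where "x \<in> C" "x \<in> U" "v = p x"
      by auto
    then have "\<forall>\<^sub>F u in at_left v. p -` {u} \<subseteq> U"
      using assms by (auto simp: lex_open_def)
    then show "\<forall>\<^sub>F u in at_left v. u \<notin> p ` (C \<inter> U) \<inter> p ` (- U)"
      by (rule eventually_mono) auto
  qed
  moreover have "countable (p ` (U - C) \<inter> p ` (- U))"
  proof (rule countable_if_eventually_not_in_at_right)
    fix v assume "v \<in> p ` (U - C) \<inter> p ` (- U)"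
    then obtain y where "y \<notin> C" "y \<in> U" "v = p y"
      by auto
    then have "\<forall>\<^sub>F u in at_right v. p -` {u} \<subseteq> U"
      using assms by (auto simp: lex_open_def)
    then show "\<forall>\<^sub>F u in at_right v. u \<notin> p ` (U - C) \<inter> p ` (- U)"
      by (rule eventually_mono) auto
  qed
  moreover have "split_keys p C U \<subseteq> (p ` (C \<inter> U) \<inter> p ` (- U)) \<union> (p ` (U - C) \<inter> p ` (- U))"
  proof
    fix v assume "v \<in> split_keys p C U"
    then obtain x y where "x \<in> C" "y \<notin> C" "p x = v" "p y = v" "x \<in> U \<longleftrightarrow> y \<notin> U"
      by (auto simp: split_keys_def)
    then show "v \<in> (p ` (C \<inter> U) \<inter> p ` (- U)) \<union> (p ` (U - C) \<inter> p ` (- U))"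
      by (cases "x \<in> U") (auto intro: rev_image_eqI)
  qed
  ultimately show ?thesis
    by (meson countable_Un countable_subset)
qed

locale lex_key =
  fixes p :: "real \<Rightarrow> real" and C :: "real set"
  assumes lex_key_inj: "p x = p y \<Longrightarrow> (x \<in> C \<longleftrightarrow> y \<in> C) \<Longrightarrow> x = y"
begin

lemma lex_less_total: "x \<noteq> y \<Longrightarrow> lex_less p C x y \<or> lex_less p C y x"
  unfolding lex_less_def using lex_key_inj by (metis linorder_neqE_linordered_idom)

lemma lex_sel_pair: "r \<noteq> s \<Longrightarrow> lex_sel p C {r, s} = (if lex_less p C r s then r else s)"
  unfolding lex_sel_def
  by (rule some_equality) (use lex_less_total lex_less_asym in auto)

lemma sel_less_lex_sel: "sel_less (lex_sel p C) = lex_less p C"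
proof (intro ext)
  fix r s
  show "sel_less (lex_sel p C) r s \<longleftrightarrow> lex_less p C r s"
  proof (cases "r = s")
    case True
    then show ?thesis
      by (simp add: sel_less_def lex_less_def)
  next
    case False
    then show ?thesis
      using lex_less_total[OF False] lex_less_asym by (auto simp: sel_less_def lex_sel_pair)
  qed
qed

lemma two_point_selection_lex_sel: "two_point_selection (lex_sel p C)"
  unfolding two_point_selection_def
  by (auto simp: card_2_iff lex_sel_pair)

lemma lex_open_if_openin:
  assumes "openin (sel_topology (lex_sel p C)) U"
  shows "lex_open p C U"
proof -
  have "generate_topology_on
      ({sel_ray_left (lex_sel p C) r | r. True} \<union> {sel_ray_right (lex_sel p C) r | r. True}) U"
    using assms by (simp add: sel_topology_def openin_topology_generated_by_iff)
  then show ?thesis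
  proof induction
    case Empty
    then show ?case
      by (simp add: lex_open_def)
  next
    case (Int a b)
    show ?case
      unfolding lex_open_def
    proof
      fix x assume "x \<in> a \<inter> b"
      then have "\<forall>\<^sub>F v in (if x \<in> C then at_left (p x) else at_right (p x)). p -` {v} \<subseteq> a"
        and "\<forall>\<^sub>F v in (if x \<in> C then at_left (p x) else at_right (p x)). p -` {v} \<subseteq> b"
        using Int.IH by (auto simp: lex_open_def)
      then show "\<forall>\<^sub>F v in (if x \<in> C then at_left (p x) else at_right (p x)). p -` {v} \<subseteq> a \<inter> b"
        by (rule eventually_elim2) simp
    qed
  next
    case (UN K)
    then show ?case
      unfolding lex_open_def by (fastforce elim: eventually_mono)
  next
    case (Basis s)
    then show ?case
      by (auto simp: sel_ray_left_def sel_ray_right_def sel_less_lex_sel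
          lex_open_lex_less_below lex_open_lex_less_above)
  qed
qed

lemma countable_split_keys_if_sel_borel:
  assumes "A \<in> sel_borel (lex_sel p C)"
  shows "countable (split_keys p C A)"
  using assms unfolding sel_borel_def
proof induction
  case (Basic U)
  then show ?case
    by (simp add: countable_split_keys_if_lex_open lex_open_if_openin)
next
  case Empty
  then show ?case
    by (simp add: split_keys_def)
next
  case (Compl A)
  moreover have "split_keys p C (UNIV - A) = split_keys p C A"
    unfolding split_keys_def by auto
  ultimately show ?case
    by simp
next
  case (Union A)
  have "split_keys p C (\<Union>i. A i) \<subseteq> (\<Union>i. split_keys p C (A i))"
    unfolding split_keys_def by blast
  with Union show ?case
    by (meson countable_UN countable_subset countableI_type)
qed

lemma not_sel_borel_if_twins:
  assumes "uncountable C" and twins: "\<And>x. x \<in> C \<Longrightarrow> \<exists>y. y \<notin> C \<and> p y = p x"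
  shows "C \<notin> sel_borel (lex_sel p C)"
proof
  assume "C \<in> sel_borel (lex_sel p C)"
  then have "countable (split_keys p C C)"
    by (rule countable_split_keys_if_sel_borel)
  moreover have "p ` C \<subseteq> split_keys p C C"
    using twins by (force simp: split_keys_def)
  moreover have "inj_on p C"
    by (rule inj_onI) (use lex_key_inj in blast)
  then have "uncountable (p ` C)"
    using assms(1) countable_image_inj_on by blast
  ultimately show False
    using countable_subset by blast
qed

lemma tail_cover_lex_sel_Ioc:
  assumes "\<And>n. p (a n) \<le> - real n" and "\<And>n. real n \<le> p (b n)"
  shows "\<exists>n\<ge>N. x \<in> sel_Ioc (lex_sel p C) (a n) (b n)"
proof -
  obtain m :: nat where "\<bar>p x\<bar> < m"
    using reals_Archimedean2 by blast
  then have "p (a (max m N)) < p x \<and> p x < p (b (max m N))"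
    using assms[of "max m N"] by (auto simp: of_nat_max)
  then show ?thesis
    by (intro exI[of _ "max m N"]) (auto simp: sel_Ioc_def sel_le_def sel_less_lex_sel lex_less_def)
qed

end

lemma eqpoll_Compl_obtains_swapping_involution:
  assumes "C \<approx> - C"
  obtains \<sigma> :: "'a \<Rightarrow> 'a" where "\<And>x. \<sigma> (\<sigma> x) = x" and "\<And>x. \<sigma> x \<in> C \<longleftrightarrow> x \<notin> C"
proof -
  obtain h where h: "bij_betw h C (- C)"
    using assms by (auto simp: eqpoll_def)
  then have h': "bij_betw (inv_into C h) (- C) C"
    by (rule bij_betw_inv_into)
  define \<sigma> where "\<sigma> x = (if x \<in> C then h x else inv_into C h x)" for x
  show thesis
  proof (rule that)
    show "\<sigma> (\<sigma> x) = x" and "\<sigma> x \<in> C \<longleftrightarrow> x \<notin> C" for x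
      using bij_betwE[OF h] bij_betwE[OF h'] bij_betw_inv_into_left[OF h] bij_betw_inv_into_right[OF h]
      by (auto simp: \<sigma>_def)
  qed
qed

text \<open>The key of \<open>x\<close> is \<open>\<plusminus>exp (max x (\<sigma> x))\<close>, with the minus sign exactly on the twin pairs of
  the points \<open>n\<close>; choosing \<open>b\<^sub>n\<close> close to \<open>n\<close> outside these countably many pairs makes the keys
  of \<open>a\<^sub>n = n\<close> and \<open>b\<^sub>n\<close> escape to \<open>-\<infinity>\<close> and \<open>+\<infinity>\<close>.\<close>
lemma swapping_involution_obtains_lex_key:
  fixes \<sigma> :: "real \<Rightarrow> real"
  assumes involution: "\<And>x. \<sigma> (\<sigma> x) = x" and swaps: "\<And>x. \<sigma> x \<in> C \<longleftrightarrow> x \<notin> C"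
  obtains p a b where "lex_key p C" and "\<And>x. p (\<sigma> x) = p x" and "summable (\<lambda>n. \<bar>b n - a n\<bar>)"
    and "\<And>n. p (a n) \<le> - real n" and "\<And>n. real n \<le> p (b n)"
proof -
  define m where "m x = max x (\<sigma> x)" for x
  have m_swap: "m (\<sigma> x) = m x" for x
    by (simp add: m_def involution max.commute)
  have m_ge: "x \<le> m x" for x
    by (simp add: m_def)
  have m_eq: "y = x \<or> y = \<sigma> x" if "m x = m y" for x y
    using that involution unfolding m_def max_def by (metis (full_types))
  define a where "a n = real n" for n
  define Z where "Z = range a \<union> \<sigma> ` range a"
  have Z_swap: "\<sigma> x \<in> Z \<longleftrightarrow> x \<in> Z" for x
    unfolding Z_def by (metis Un_iff image_iff involution)
  have "\<exists>y. y \<in> {a n<..<a n + (1/2)^n} - Z" for n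
  proof -
    have "uncountable ({a n<..<a n + (1/2)^n} - Z)"
      by (intro uncountable_minus_countable) (auto simp: uncountable_open_interval Z_def)
    then show ?thesis
      by (metis countable_empty ex_in_conv)
  qed
  then obtain b where b: "\<And>n. b n \<in> {a n<..<a n + (1/2)^n} - Z"
    by metis
  define p where "p x = (if x \<in> Z then - exp (m x) else exp (m x))" for x
  have p_eq: "m x = m y" if "p x = p y" for x y
    using arg_cong[OF that, of abs] by (auto simp: p_def split: if_splits)
  show thesis
  proof
    show "lex_key p C"
      by unfold_locales (use m_eq p_eq swaps in blast)
    show "p (\<sigma> x) = p x" for x
      by (simp add: p_def m_swap Z_swap)
    have "\<bar>b n - a n\<bar> \<le> (1/2)^n" for n
      using b[of n] by auto
    then show "summable (\<lambda>n. \<bar>b n - a n\<bar>)"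
      by (intro summable_comparison_test'[OF summable_geometric[of "1/2"], where N=0]) auto
    show "p (a n) \<le> - real n" for n
    proof -
      have "real n \<le> exp (a n)"
        using exp_ge_add_one_self[of "a n"] unfolding a_def by linarith
      also have "\<dots> \<le> exp (m (a n))"
        using m_ge by simp
      finally show ?thesis
        by (simp add: p_def Z_def)
    qed
    show "real n \<le> p (b n)" for n
    proof -
      have "real n < b n"
        using b[of n] by (simp add: a_def)
      then have "real n \<le> exp (b n)"
        using exp_ge_add_one_self[of "b n"] by linarith
      also have "\<dots> \<le> exp (m (b n))"
        using m_ge by simp
      finally show ?thesis
        using b[of n] by (simp add: p_def)
    qed
  qed
qed

theorem theorem3p21:
  fixes C :: "real set"
  assumes "C \<approx> (UNIV :: real set)" and "(UNIV - C) \<approx> (UNIV :: real set)"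
  shows "\<exists>f. two_point_selection f \<and> C \<in> sel_measurable f - sel_borel f"
proof -
  have "C \<approx> - C"
    using assms by (metis Compl_eq_Diff_UNIV eqpoll_sym eqpoll_trans)
  then obtain \<sigma> :: "real \<Rightarrow> real" where "\<And>x. \<sigma> (\<sigma> x) = x" and swaps: "\<And>x. \<sigma> x \<in> C \<longleftrightarrow> x \<notin> C"
    by (rule eqpoll_Compl_obtains_swapping_involution) (rule that)
  then obtain p a b where "lex_key p C" and twins: "\<And>x. p (\<sigma> x) = p x"
    and summable: "summable (\<lambda>n. \<bar>b n - a n\<bar>)"
    and "\<And>n. p (a n) \<le> - real n" and "\<And>n. real n \<le> p (b n)"
    by (rule swapping_involution_obtains_lex_key) (rule that)
  interpret lex_key p C by fact
  have "sel_measurable (lex_sel p C) = UNIV"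
    by (intro sel_measurable_eq_UNIV_if_sel_outer_eq_0 sel_outer_eq_0_if_tail_cover[OF summable]
        tail_cover_lex_sel_Ioc) fact+
  moreover have "C \<notin> sel_borel (lex_sel p C)"
  proof (rule not_sel_borel_if_twins)
    show "uncountable C"
      using countable_eqpoll[OF _ eqpoll_sym[OF assms(1)]] uncountable_UNIV_real by blast
    show "\<exists>y. y \<notin> C \<and> p y = p x" if "x \<in> C" for x
      using that twins swaps by blast
  qed
  ultimately show ?thesis
    using two_point_selection_lex_sel by blast
qed

end
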